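(* Let $G$ be a finite Dedekind group. Then $G$ is code-perfect if and only if every subgroup of $G$ is code-perfect.
   Context: A Dedekind group is a group all of whose subgroups are normal (every subgroup of a Dedekind group is again a Dedekind group). For a normal subgroup $H$ of a finite group $G$ with identity $e$, the subgroup sum graph $\Gamma_{G,H}$ is the simple undirected graph with vertex set $G$ in which distinct vertices $x,y$ are adjacent if and only if $xy\in H\setminus\{e\}$. A perfect code in a graph is a set $C$ of vertices that is independent and such that every vertex not in $C$ is adjacent to exactly one vertex of $C$. A finite group $G$ is code-perfect if $\Gamma_{G,H}$ admits a perfect code for every normal subgroup $H$ of $G$. *)

theory Defs
  imports "HOL-Algebra.Algebra"
begin

definition dedekind_group :: "('a, 'b) monoid_scheme \<Rightarrow> bool" where
  "dedekind_group G \<longleftrightarrow> group G \<and> (\<forall>H. subgroup H G \<longrightarrow> H \<lhd> G)"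

definition sum_graph_adj :: "('a, 'b) monoid_scheme \<Rightarrow> 'a set \<Rightarrow> 'a \<Rightarrow> 'a \<Rightarrow> bool" where
  "sum_graph_adj G H x y \<longleftrightarrow>
     x \<in> carrier G \<and> y \<in> carrier G \<and> x \<noteq> y \<and> x \<otimes>\<^bsub>G\<^esub> y \<in> H - {\<one>\<^bsub>G\<^esub>}"

definition perfect_code :: "'v set \<Rightarrow> ('v \<Rightarrow> 'v \<Rightarrow> bool) \<Rightarrow> 'v set \<Rightarrow> bool" where
  "perfect_code V E C \<longleftrightarrow> C \<subseteq> V \<and>
     (\<forall>x\<in>C. \<forall>y\<in>C. \<not> E x y) \<and>
     (\<forall>v\<in>V - C. \<exists>!c. c \<in> C \<and> E v c)"

definition code_perfect :: "('a, 'b) monoid_scheme \<Rightarrow> bool" where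
  "code_perfect G \<longleftrightarrow>
     (\<forall>H. H \<lhd> G \<longrightarrow> (\<exists>C. perfect_code (carrier G) (sum_graph_adj G H) C))"

end

theory Submission
  imports Defs
begin

text \<open>If \<open>H \<subseteq> K \<le> G\<close>, every edge of \<open>\<Gamma>\<^sub>G\<^sub>,\<^sub>H\<close> leaving a vertex of \<open>K\<close> stays inside \<open>K\<close>
  (since \<open>y = x\<inverse>(xy)\<close>), so \<open>K\<close> is a union of connected components and \<open>\<Gamma>\<^sub>K\<^sub>,\<^sub>H\<close> is
  the induced subgraph on it. A perfect code restricts to a perfect code of any such
  union, and in a Dedekind group every normal subgroup of \<open>K\<close> is normal in \<open>G\<close>.\<close>

lemma perfect_code_restrict_closed:
  assumes code: "perfect_code V E C" and "W \<subseteq> V"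
    and closed: "\<And>v c. v \<in> W \<Longrightarrow> E v c \<Longrightarrow> c \<in> W"
  shows "perfect_code W (\<lambda>x y. x \<in> W \<and> y \<in> W \<and> E x y) (C \<inter> W)"
  unfolding perfect_code_def
proof (intro conjI ballI)
  show "C \<inter> W \<subseteq> W" by blast
next
  fix x y assume "x \<in> C \<inter> W" "y \<in> C \<inter> W"
  then show "\<not> (x \<in> W \<and> y \<in> W \<and> E x y)"
    using code unfolding perfect_code_def by blast
next
  fix v assume v: "v \<in> W - C \<inter> W"
  with \<open>W \<subseteq> V\<close> have "v \<in> V - C" by blast
  then obtain c where c: "c \<in> C" "E v c" and unique: "\<And>c'. c' \<in> C \<Longrightarrow> E v c' \<Longrightarrow> c' = c"
    using code unfolding perfect_code_def by metis
  have "c \<in> W" using closed v c(2) by blast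
  with v c unique show "\<exists>!c. c \<in> C \<inter> W \<and> (v \<in> W \<and> c \<in> W \<and> E v c)" by blast
qed

lemma sum_graph_adj_subgroup:
  assumes "subgroup K G"
  shows "sum_graph_adj (G\<lparr>carrier := K\<rparr>) H = (\<lambda>x y. x \<in> K \<and> y \<in> K \<and> sum_graph_adj G H x y)"
  using subgroup.subset[OF assms] unfolding sum_graph_adj_def by (auto intro!: ext)

lemma sum_graph_adj_closed_subgroup:
  fixes G (structure)
  assumes "group G" and K: "subgroup K G" and "H \<subseteq> K"
    and "x \<in> K" and adj: "sum_graph_adj G H x y"
  shows "y \<in> K"
proof -
  interpret group G by fact
  have "x \<in> carrier G" "y \<in> carrier G" "x \<otimes> y \<in> K"
    using adj \<open>H \<subseteq> K\<close> unfolding sum_graph_adj_def by auto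
  then have "y = inv x \<otimes> (x \<otimes> y)" by (simp add: m_assoc[symmetric])
  also have "\<dots> \<in> K"
    using \<open>x \<in> K\<close> \<open>x \<otimes> y \<in> K\<close> K by (simp add: subgroup.m_closed subgroup.m_inv_closed)
  finally show ?thesis .
qed

lemma perfect_code_sum_graph_subgroup:
  assumes "group G" and K: "subgroup K G" and "H \<subseteq> K"
    and "perfect_code (carrier G) (sum_graph_adj G H) C"
  shows "perfect_code K (sum_graph_adj (G\<lparr>carrier := K\<rparr>) H) (C \<inter> K)"
proof -
  have "perfect_code K (\<lambda>x y. x \<in> K \<and> y \<in> K \<and> sum_graph_adj G H x y) (C \<inter> K)"
    using perfect_code_restrict_closed assms subgroup.subset[OF K]
      sum_graph_adj_closed_subgroup[OF assms(1-3)] by blast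
  then show ?thesis by (simp add: sum_graph_adj_subgroup[OF K])
qed

lemma code_perfect_subgroup:
  assumes "dedekind_group G" and "code_perfect G" and K: "subgroup K G"
  shows "code_perfect (G\<lparr>carrier := K\<rparr>)"
  unfolding code_perfect_def
proof (intro allI impI)
  fix H assume "H \<lhd> G\<lparr>carrier := K\<rparr>"
  then have H_sub_K: "subgroup H (G\<lparr>carrier := K\<rparr>)" by (rule normal_imp_subgroup)
  have "group G" using \<open>dedekind_group G\<close> unfolding dedekind_group_def by blast
  then have "subgroup H G" using H_sub_K group.incl_subgroup K by blast
  then have "H \<lhd> G" using \<open>dedekind_group G\<close> unfolding dedekind_group_def by blast
  then obtain C where "perfect_code (carrier G) (sum_graph_adj G H) C"
    using \<open>code_perfect G\<close> unfolding code_perfect_def by blast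
  moreover have "H \<subseteq> K" using subgroup.subset[OF H_sub_K] by simp
  ultimately show "\<exists>C. perfect_code (carrier (G\<lparr>carrier := K\<rparr>)) (sum_graph_adj (G\<lparr>carrier := K\<rparr>) H) C"
    using perfect_code_sum_graph_subgroup[OF \<open>group G\<close> K] by auto
qed

theorem lemma4p4:
  fixes G :: "('a, 'b) monoid_scheme"
  assumes "group G" and "finite (carrier G)" and "dedekind_group G"
  shows "code_perfect G \<longleftrightarrow>
           (\<forall>K. subgroup K G \<longrightarrow> code_perfect (G\<lparr>carrier := K\<rparr>))"
proof
  assume "code_perfect G"
  then show "\<forall>K. subgroup K G \<longrightarrow> code_perfect (G\<lparr>carrier := K\<rparr>)"
    using code_perfect_subgroup \<open>dedekind_group G\<close> by blast
next
  assume "\<forall>K. subgroup K G \<longrightarrow> code_perfect (G\<lparr>carrier := K\<rparr>)"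
  then have "code_perfect (G\<lparr>carrier := carrier G\<rparr>)"
    using group.subgroup_self[OF \<open>group G\<close>] by blast
  then show "code_perfect G" by simp
qed

end
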